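(* Let $\alpha,\beta<1$ be real numbers. Let $A,B\subset\mathbb{N}$ be such that $A(X)\ge C\frac{\sqrt{X}}{(\log X)^{\alpha}}$ and $B(X)\ge C\frac{\sqrt{X}}{(\log X)^{\beta}}$ for some constant $C>0$ and all sufficiently large $X$. Then there is a constant $C'>0$ such that for all sufficiently large $X$, $$\sum_{\substack{a\in A,\ b\in B\\ ab\le X}}1\ge C'\sqrt{X}(\log X)^{1-\alpha-\beta}.$$
   Context: $\mathbb{N}$ is the set of positive integers; for $S\subset\mathbb{N}_0$, $S(X)=|S\cap[1,X]|$. *)

theory Defs
  imports Complex_Main
begin

definition count_upto :: "nat set \<Rightarrow> real \<Rightarrow> nat" where
  "count_upto S X = card {n \<in> S. 1 \<le> n \<and> real n \<le> X}"

end

theory Submission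
  imports Defs
begin

text \<open>Every \<open>a \<in> A\<close> with \<open>a \<le> 2\<^sup>j\<close> pairs with every \<open>b \<in> B\<close> with \<open>b \<le> X/2\<^sup>j\<close>; summation by
  parts turns this into \<open>\<Sum>\<^sub>j (g(j) - g(j+1)) A(2\<^sup>j) \<le> #{(a,b). ab \<le> X}\<close> for any
  \<open>g(j) \<le> B(X/2\<^sup>j)\<close>, and we take \<open>g(j) = C\<surd>(X/2\<^sup>j) / (log (X/2\<^sup>j))\<^sup>\<beta>\<close>. Because
  \<open>\<beta> < 1\<close>, this \<open>g\<close> loses at least a tenth of its value from \<open>j\<close> to \<open>j + 1\<close>, so each scale
  contributes \<open>\<gg> g(j) A(2\<^sup>j) \<gg> \<surd>X (log X)\<^sup>-\<^sup>\<alpha>\<^sup>-\<^sup>\<beta>\<close>.\<close>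

lemma finite_count_upto_set: "finite {n \<in> S. 1 \<le> n \<and> real n \<le> X}"
  by (rule finite_subset[of _ "{..nat \<lceil>X\<rceil>}"]) (auto simp: le_nat_iff, linarith)

lemma count_upto_mono: "X \<le> Y \<Longrightarrow> count_upto S X \<le> count_upto S Y"
  unfolding count_upto_def by (rule card_mono[OF finite_count_upto_set]) auto

lemma finite_pairs_prod_le:
  assumes "0 \<notin> A" "0 \<notin> B"
  shows "finite {(a, b). a \<in> A \<and> b \<in> B \<and> real (a * b) \<le> X}"
proof (rule finite_subset)
  show "{(a, b). a \<in> A \<and> b \<in> B \<and> real (a * b) \<le> X} \<subseteq> {..nat \<lceil>X\<rceil>} \<times> {..nat \<lceil>X\<rceil>}"
  proof clarsimp
    fix a b assume ab: "a \<in> A" "b \<in> B" "real a * real b \<le> X"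
    then have "1 \<le> a" "1 \<le> b" using assms by (auto simp: Suc_le_eq intro!: gr0I)
    then have "real a \<le> real a * real b" "real b \<le> real a * real b" by auto
    then have "real a \<le> X" "real b \<le> X" using ab(3) by linarith+
    then show "a \<le> nat \<lceil>X\<rceil> \<and> b \<le> nat \<lceil>X\<rceil>" by (auto simp: le_nat_iff, linarith+)
  qed
qed simp

lemma sum_count_upto_div_le_card_pairs:
  assumes "finite S" "S \<subseteq> A" "0 \<notin> A" "0 \<notin> B"
  shows "(\<Sum>a\<in>S. real (count_upto B (X / real a)))
           \<le> real (card {(a, b). a \<in> A \<and> b \<in> B \<and> real (a * b) \<le> X})"
proof -
  define F where "F a = {b \<in> B. 1 \<le> b \<and> real b \<le> X / real a}" for a
  have "Sigma S F \<subseteq> {(a, b). a \<in> A \<and> b \<in> B \<and> real (a * b) \<le> X}"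
  proof clarsimp
    fix a b assume "a \<in> S" "b \<in> F a"
    moreover have "0 < a" using \<open>a \<in> S\<close> assms(2,3) by (auto intro: gr0I)
    ultimately show "a \<in> A \<and> b \<in> B \<and> real a * real b \<le> X"
      using assms(2) unfolding F_def by (auto simp: field_simps)
  qed
  then have "card (Sigma S F) \<le> card {(a, b). a \<in> A \<and> b \<in> B \<and> real (a * b) \<le> X}"
    by (intro card_mono finite_pairs_prod_le assms(3,4))
  moreover have "card (Sigma S F) = (\<Sum>a\<in>S. card (F a))"
    unfolding F_def by (intro card_SigmaI assms(1) ballI finite_count_upto_set)
  ultimately show ?thesis
    unfolding count_upto_def F_def by (simp flip: of_nat_sum)
qed

lemma telescoping_sum_upclosed_le:
  fixes f :: "nat \<Rightarrow> real"
  assumes "m \<le> n" and upclosed: "\<And>i j. P i \<Longrightarrow> i \<le> j \<Longrightarrow> P j" and "P n" and "0 \<le> f n"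
    and bound: "\<And>j. m \<le> j \<Longrightarrow> j \<le> n \<Longrightarrow> P j \<Longrightarrow> f j \<le> c"
  shows "(\<Sum>j\<in>{m..<n}. if P j then f j - f (Suc j) else 0) \<le> c"
  using assms(1) bound
proof (induction m rule: inc_induct)
  case base
  then show ?case using \<open>P n\<close> \<open>0 \<le> f n\<close> by fastforce
next
  case (step m)
  show ?case
  proof (cases "P m")
    case True
    have "(\<Sum>j\<in>{m..<n}. if P j then f j - f (Suc j) else 0) = (\<Sum>j\<in>{m..<n}. f j - f (Suc j))"
      using upclosed[OF True] by (intro sum.cong) auto
    also have "\<dots> = f m - f n"
      using sum_Suc_diff'[of m n "\<lambda>j. - f j"] step.hyps by simp
    also have "\<dots> \<le> c" using step.prems[of m] step.hyps True \<open>0 \<le> f n\<close> by simp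
    finally show ?thesis .
  next
    case False
    then show ?thesis
      using step.hyps step.IH step.prems by (simp add: sum.atLeast_Suc_lessThan)
  qed
qed

text \<open>An \<open>a \<le> 2\<^sup>J\<^sup>2\<close> is counted in the \<open>j\<close>-th term for every \<open>j\<close> from the first with
  \<open>a \<le> 2\<^sup>j\<close> on; these terms telescope to at most \<open>g(j) \<le> B(X/2\<^sup>j) \<le> B(X/a)\<close>.\<close>

lemma dyadic_abel_sum_le_card_pairs:
  fixes g :: "nat \<Rightarrow> real"
  assumes "J1 \<le> J2" "0 \<le> X" "0 \<notin> A" "0 \<notin> B" "0 \<le> g J2"
    and g_le: "\<And>j. J1 \<le> j \<Longrightarrow> j \<le> J2 \<Longrightarrow> g j \<le> real (count_upto B (X / 2^j))"
  shows "(\<Sum>j\<in>{J1..<J2}. (g j - g (Suc j)) * real (count_upto A (2^j)))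
           \<le> real (card {(a, b). a \<in> A \<and> b \<in> B \<and> real (a * b) \<le> X})"
proof -
  define S where "S = {a \<in> A. 1 \<le> a \<and> a \<le> 2^J2}"
  have "finite S" unfolding S_def by (rule finite_subset[of _ "{..2^J2}"]) auto
  have count_A: "real (count_upto A (2^j)) = (\<Sum>a\<in>S. if a \<le> 2^j then 1 else 0)"
    if "j \<le> J2" for j
  proof -
    have "(2::nat)^j \<le> 2^J2" using that by (intro power_increasing) auto
    then have "{n \<in> A. 1 \<le> n \<and> real n \<le> 2^j} = {a \<in> S. a \<le> 2^j}"
      unfolding S_def by (auto intro: order_trans)
    then show ?thesis
      using \<open>finite S\<close> by (simp add: count_upto_def sum.If_cases Int_def conj_commute)
  qed
  have "(\<Sum>j\<in>{J1..<J2}. (g j - g (Suc j)) * real (count_upto A (2^j)))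
      = (\<Sum>j\<in>{J1..<J2}. \<Sum>a\<in>S. if a \<le> 2^j then g j - g (Suc j) else 0)"
    by (intro sum.cong refl) (simp add: count_A sum_distrib_left if_distrib cong: if_cong)
  also have "\<dots> = (\<Sum>a\<in>S. \<Sum>j\<in>{J1..<J2}. if a \<le> 2^j then g j - g (Suc j) else 0)"
    by (rule sum.swap)
  also have "\<dots> \<le> (\<Sum>a\<in>S. real (count_upto B (X / real a)))"
  proof (rule sum_mono)
    fix a assume "a \<in> S"
    then have a: "1 \<le> a" "a \<le> 2^J2" unfolding S_def by auto
    have "g j \<le> real (count_upto B (X / real a))" if "J1 \<le> j" "j \<le> J2" "a \<le> 2^j" for j
    proof -
      have "X / 2^j \<le> X / real a"
        using that(3) a(1) \<open>0 \<le> X\<close>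
        by (intro divide_left_mono) auto
      then have "count_upto B (X / 2^j) \<le> count_upto B (X / real a)" by (rule count_upto_mono)
      then show ?thesis using g_le[OF that(1,2)] by (meson of_nat_le_iff order_trans)
    qed
    moreover have "a \<le> 2^k" if "a \<le> 2^i" "i \<le> k" for i k
      using that power_increasing[of i k "2::nat"] by linarith
    ultimately show "(\<Sum>j\<in>{J1..<J2}. if a \<le> 2^j then g j - g (Suc j) else 0)
                 \<le> real (count_upto B (X / real a))"
      using a(2) assms(1,5) by (intro telescoping_sum_upclosed_le)
  qed
  also have "\<dots> \<le> real (card {(a, b). a \<in> A \<and> b \<in> B \<and> real (a * b) \<le> X})"
    by (rule sum_count_upto_div_le_card_pairs) (use \<open>finite S\<close> assms(3,4) in \<open>auto simp: S_def\<close>)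
  finally show ?thesis .
qed

lemma sqrt_div_ln_powr_halve_le:
  fixes \<beta> y :: real
  assumes "\<beta> < 1" "0 < y" "6 * ln 2 \<le> ln y"
  shows "sqrt (y/2) / ln (y/2) powr \<beta> \<le> 9/10 * (sqrt y / ln y powr \<beta>)"
proof -
  define l l' where "l = ln y" and "l' = ln (y/2)"
  have "l' = l - ln 2" using assms(2) by (simp add: l_def l'_def ln_div)
  moreover have "0 < ln (2::real)" "6 * ln 2 \<le> l" using assms(3) by (simp_all add: l_def)
  ultimately have l': "0 < l'" "l' \<le> l" "l \<le> 6/5 * l'" by linarith+
  define r where "r = l / l'"
  have r: "1 \<le> r" "r \<le> 6/5" using l' by (auto simp: r_def field_simps)
  have "r powr \<beta> \<le> r" using powr_mono[of \<beta> 1 r] assms(1) r by simp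
  moreover have "(1.4::real) \<le> sqrt 2" by (rule real_le_rsqrt) (simp add: power2_eq_square)
  ultimately have "r powr \<beta> \<le> 9/10 * sqrt 2" using r by linarith
  moreover have "l powr \<beta> = r powr \<beta> * l' powr \<beta>"
    using l' r by (simp add: r_def powr_mult[symmetric])
  moreover have "0 < r powr \<beta>" "0 < l' powr \<beta>" "0 < sqrt y" using r l' assms(2) by auto
  ultimately show ?thesis
    unfolding l_def[symmetric] l'_def[symmetric] by (simp add: real_sqrt_divide field_simps)
qed

lemma quarter_powr_abs_le_powr:
  fixes L u a :: real
  assumes "0 < L" "L / 4 \<le> u" "u \<le> L"
  shows "(1/4) powr \<bar>a\<bar> * L powr (-a) \<le> u powr (-a)"
proof -
  have r: "1/4 \<le> u/L" "u/L \<le> 1" using assms by (auto simp: field_simps)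
  have "(1/4) powr \<bar>a\<bar> \<le> (u/L) powr (-a)"
  proof (cases "0 \<le> a")
    case True
    have "(1/4::real) powr \<bar>a\<bar> \<le> 1" by (simp add: powr_le1)
    also have "1 \<le> (u/L) powr (-a)"
    proof -
      have "(u/L) powr a \<le> 1" "0 < (u/L) powr a" using powr_le1[of a "u/L"] True r by auto
      then show ?thesis by (simp add: powr_minus one_le_inverse)
    qed
    finally show ?thesis .
  next
    case False
    then show ?thesis using r by (simp add: powr_mono2)
  qed
  moreover have "u powr (-a) = L powr (-a) * (u/L) powr (-a)"
    using assms by (simp add: powr_mult[symmetric])
  ultimately show ?thesis using assms(1) by (simp add: mult_left_mono mult.commute)
qed

lemma dyadic_term_lower_bound:
  fixes C \<alpha> \<beta> X c :: real and j :: nat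
  assumes "0 < C" "\<beta> < 1" "0 < X" "16 \<le> ln X"
    and j: "ln X / 4 \<le> real j * ln 2" "real j * ln 2 \<le> ln X / 2"
    and c: "C * sqrt (2^j) / ln (2^j) powr \<alpha> \<le> c"
  shows "C^2 / 10 * (1/4) powr \<bar>\<alpha>\<bar> * (1/4) powr \<bar>\<beta>\<bar> * sqrt X * ln X powr (-\<alpha>-\<beta>)
     \<le> (C * sqrt (X/2^j) / ln (X/2^j) powr \<beta>
          - C * sqrt (X/2^Suc j) / ln (X/2^Suc j) powr \<beta>) * c"
proof -
  define L u v y where "L = ln X" and "u = real j * ln 2" and "v = L - u" and "y = X / 2^j"
  have ln_u: "ln (2^j) = u" by (simp add: u_def ln_realpow)
  have ln_y: "ln y = v" using assms(3) by (simp add: y_def v_def L_def ln_div ln_u)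
  have y: "0 < y" "sqrt y * sqrt (2^j) = sqrt X"
    using assms(3) by (simp_all add: y_def real_sqrt_mult[symmetric])
  have "X / 2^Suc j = y / 2" by (simp add: y_def)
  then have rhs: "(C * sqrt (X/2^j) / ln (X/2^j) powr \<beta>
          - C * sqrt (X/2^Suc j) / ln (X/2^Suc j) powr \<beta>) * c
      = (C * sqrt y / ln y powr \<beta> - C * sqrt (y/2) / ln (y/2) powr \<beta>) * c"
    by (simp add: y_def ac_simps)
  have L: "0 < L" "L/4 \<le> u" "u \<le> L" "L/4 \<le> v" "v \<le> L"
    using assms(4) j by (auto simp: L_def u_def v_def)
  have "6 * ln 2 \<le> ln y" using ln_y j assms(4) ln_2_less_1 by (simp add: v_def u_def L_def)
  from mult_left_mono[OF sqrt_div_ln_powr_halve_le[OF assms(2) y(1) this], of C] assms(1)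
  have drop: "C * sqrt y * v powr (-\<beta>) / 10
      \<le> C * sqrt y / ln y powr \<beta> - C * sqrt (y/2) / ln (y/2) powr \<beta>"
    by (simp add: ln_y powr_minus_divide)
  have "0 \<le> C * sqrt y * v powr (-\<beta>) / 10" using assms(1) y(1) by simp
  with drop have "0 \<le> C * sqrt y / ln y powr \<beta> - C * sqrt (y/2) / ln (y/2) powr \<beta>"
    by linarith
  moreover have "C * sqrt (2^j) * u powr (-\<alpha>) \<le> c" using c by (simp add: ln_u powr_minus_divide)
  ultimately have product: "C * sqrt y * v powr (-\<beta>) / 10 * (C * sqrt (2^j) * u powr (-\<alpha>))
      \<le> (C * sqrt y / ln y powr \<beta> - C * sqrt (y/2) / ln (y/2) powr \<beta>) * c"
    using drop assms(1) by (intro mult_mono) auto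
  have "C^2 / 10 * (1/4) powr \<bar>\<alpha>\<bar> * (1/4) powr \<bar>\<beta>\<bar> * sqrt X * L powr (-\<alpha>-\<beta>)
      = C^2 / 10 * sqrt X * ((1/4) powr \<bar>\<alpha>\<bar> * L powr (-\<alpha>)) * ((1/4) powr \<bar>\<beta>\<bar> * L powr (-\<beta>))"
    using powr_add[of L "-\<alpha>" "-\<beta>"] by (simp add: mult_ac)
  also have "\<dots> \<le> C^2 / 10 * sqrt X * u powr (-\<alpha>) * v powr (-\<beta>)"
    using quarter_powr_abs_le_powr[of L u \<alpha>] quarter_powr_abs_le_powr[of L v \<beta>] L assms(3)
    by (intro mult_mono) auto
  also have "\<dots> = C * sqrt y * v powr (-\<beta>) / 10 * (C * sqrt (2^j) * u powr (-\<alpha>))"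
    unfolding y(2)[symmetric] power2_eq_square by (simp add: mult_ac)
  also have "\<dots> \<le> (C * sqrt y / ln y powr \<beta> - C * sqrt (y/2) / ln (y/2) powr \<beta>) * c"
    by (rule product)
  finally show ?thesis unfolding rhs L_def .
qed

lemma dyadic_window:
  fixes L :: real
  assumes "16 \<le> L"
  obtains J1 J2 :: nat where "J1 \<le> J2" "L / 8 \<le> real J2 - real J1"
    "\<And>j. J1 \<le> j \<Longrightarrow> L / 4 \<le> real j * ln 2" "\<And>j. j \<le> J2 \<Longrightarrow> real j * ln 2 \<le> L / 2"
proof
  define J1 J2 where "J1 = nat \<lceil>L / (4 * ln 2)\<rceil>" and "J2 = nat \<lfloor>L / (2 * ln 2)\<rfloor>"
  have ln2: "0 < ln (2::real)" "ln (2::real) < 1" using ln_2_less_1 by auto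
  have J1: "L / (4 * ln 2) \<le> real J1" "real J1 \<le> L / (4 * ln 2) + 1"
    and J2: "L / (2 * ln 2) - 1 \<le> real J2" "real J2 \<le> L / (2 * ln 2)"
    using assms ln2 by (simp_all add: J1_def J2_def of_nat_nat)
  have "L / 4 \<le> L / (4 * ln 2)" using assms ln2 by (intro divide_left_mono) auto
  moreover have "L / (2 * ln 2) = 2 * (L / (4 * ln 2))" by simp
  ultimately show "L / 8 \<le> real J2 - real J1" using J1 J2 assms by linarith
  then show "J1 \<le> J2" using assms by simp
  show "L / 4 \<le> real j * ln 2" if "J1 \<le> j" for j
  proof -
    have "L / (4 * ln 2) \<le> real j" using J1(1) that by (meson of_nat_le_iff order_trans)
    then show ?thesis using ln2 by (simp add: field_simps)
  qed
  show "real j * ln 2 \<le> L / 2" if "j \<le> J2" for j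
  proof -
    have "real j \<le> L / (2 * ln 2)" using J2(2) that by (meson of_nat_le_iff order_trans)
    then show ?thesis using ln2 by (simp add: field_simps)
  qed
qed

lemma card_pairs_lower_bound:
  fixes \<alpha> \<beta> C X :: real and A B :: "nat set"
  assumes "\<beta> < 1" "0 \<notin> A" "0 \<notin> B" "0 < C" "0 < X" "16 \<le> ln X"
    and A: "\<And>Y. sqrt (sqrt X) \<le> Y \<Longrightarrow> C * sqrt Y / ln Y powr \<alpha> \<le> real (count_upto A Y)"
    and B: "\<And>Y. sqrt X \<le> Y \<Longrightarrow> C * sqrt Y / ln Y powr \<beta> \<le> real (count_upto B Y)"
  shows "C^2 / 80 * (1/4) powr \<bar>\<alpha>\<bar> * (1/4) powr \<bar>\<beta>\<bar> * sqrt X * ln X powr (1 - \<alpha> - \<beta>)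
           \<le> real (card {(a, b). a \<in> A \<and> b \<in> B \<and> real (a * b) \<le> X})"
proof -
  define L where "L = ln X"
  define T where "T = C^2 / 10 * (1/4) powr \<bar>\<alpha>\<bar> * (1/4) powr \<bar>\<beta>\<bar> * sqrt X * L powr (-\<alpha>-\<beta>)"
  define g where "g j = C * sqrt (X/2^j) / ln (X/2^j) powr \<beta>" for j :: nat
  obtain J1 J2 where J: "J1 \<le> J2" "L / 8 \<le> real J2 - real J1"
    and low: "\<And>j. J1 \<le> j \<Longrightarrow> L / 4 \<le> real j * ln 2"
    and high: "\<And>j. j \<le> J2 \<Longrightarrow> real j * ln 2 \<le> L / 2"
    using dyadic_window[of L] assms(6) unfolding L_def by blast
  have ln_dyadic: "ln ((2::real)^j) = real j * ln 2" "ln (X / 2^j) = L - real j * ln 2" for j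
    using assms(5) by (simp_all add: L_def ln_div ln_realpow)
  have ln_roots: "ln (sqrt X) = L / 2" "ln (sqrt (sqrt X)) = L / 4"
    using assms(5) by (simp_all add: L_def ln_sqrt)
  have g_le: "g j \<le> real (count_upto B (X / 2^j))" if "j \<le> J2" for j
    unfolding g_def
  proof (rule B)
    have "ln (sqrt X) \<le> ln (X / 2^j)"
      using high[OF that] by (simp add: ln_dyadic ln_roots)
    then show "sqrt X \<le> X / 2^j" using assms(5) by simp
  qed
  have term_ge: "T \<le> (g j - g (Suc j)) * real (count_upto A (2^j))" if "J1 \<le> j" "j \<le> J2" for j
  proof -
    have "ln (sqrt (sqrt X)) \<le> ln ((2::real)^j)"
      using low[OF that(1)] by (simp add: ln_dyadic ln_roots)
    then have "sqrt (sqrt X) \<le> 2^j" using assms(5) by simp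
    then have "C * sqrt (2^j) / ln (2^j) powr \<alpha> \<le> real (count_upto A (2^j))" by (rule A)
    with low[OF that(1)] high[OF that(2)] show ?thesis
      unfolding T_def g_def L_def by (rule dyadic_term_lower_bound[OF assms(4,1,5,6)])
  qed
  have "L powr (1 - \<alpha> - \<beta>) = L powr (1 + (-\<alpha>-\<beta>))" by (rule arg_cong[where f="(powr) L"]) simp
  then have "L powr (1 - \<alpha> - \<beta>) = L * L powr (-\<alpha>-\<beta>)"
    using assms(6) by (simp add: powr_add L_def)
  then have "C^2 / 80 * (1/4) powr \<bar>\<alpha>\<bar> * (1/4) powr \<bar>\<beta>\<bar> * sqrt X * ln X powr (1 - \<alpha> - \<beta>)
      = L / 8 * T"
    by (simp add: T_def flip: L_def)
  also have "\<dots> \<le> (real J2 - real J1) * T"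
    using J(2) assms(5) by (intro mult_right_mono) (simp_all add: T_def)
  also have "\<dots> = (\<Sum>j\<in>{J1..<J2}. T)" using J(1) by (simp add: of_nat_diff)
  also have "\<dots> \<le> (\<Sum>j\<in>{J1..<J2}. (g j - g (Suc j)) * real (count_upto A (2^j)))"
    using term_ge by (intro sum_mono) auto
  also have "\<dots> \<le> real (card {(a, b). a \<in> A \<and> b \<in> B \<and> real (a * b) \<le> X})"
    using J(1) assms(2-5) g_le by (intro dyadic_abel_sum_le_card_pairs) (auto simp: g_def)
  finally show ?thesis .
qed

theorem lemma2p2:
  fixes \<alpha> \<beta> C :: real and A B :: "nat set"
  assumes "\<alpha> < 1" and "\<beta> < 1"
    and "0 \<notin> A" and "0 \<notin> B"
    and "C > 0"
    and "\<forall>\<^sub>F X in at_top. real (count_upto A X) \<ge> C * sqrt X / (ln X) powr \<alpha>"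
    and "\<forall>\<^sub>F X in at_top. real (count_upto B X) \<ge> C * sqrt X / (ln X) powr \<beta>"
  shows "\<exists>C'>0. \<forall>\<^sub>F X in at_top.
           real (card {(a, b). a \<in> A \<and> b \<in> B \<and> real (a * b) \<le> X})
             \<ge> C' * sqrt X * (ln X) powr (1 - \<alpha> - \<beta>)"
proof -
  obtain XA where XA: "\<And>Y. XA \<le> Y \<Longrightarrow> C * sqrt Y / ln Y powr \<alpha> \<le> real (count_upto A Y)"
    using assms(6) unfolding eventually_at_top_linorder by blast
  obtain XB where XB: "\<And>Y. XB \<le> Y \<Longrightarrow> C * sqrt Y / ln Y powr \<beta> \<le> real (count_upto B Y)"
    using assms(7) unfolding eventually_at_top_linorder by blast
  have "\<forall>\<^sub>F X in at_top. XA \<le> sqrt (sqrt X)"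
    using filterlim_compose[OF sqrt_at_top sqrt_at_top] by (simp add: filterlim_at_top)
  moreover have "\<forall>\<^sub>F X in at_top. XB \<le> sqrt X"
    using sqrt_at_top by (simp add: filterlim_at_top)
  moreover have "\<forall>\<^sub>F X in at_top. 16 \<le> ln (X::real)"
    using ln_at_top by (simp add: filterlim_at_top)
  moreover have "\<forall>\<^sub>F X in at_top. 0 < (X::real)" by (rule eventually_gt_at_top)
  ultimately have "\<forall>\<^sub>F X in at_top.
      C^2 / 80 * (1/4) powr \<bar>\<alpha>\<bar> * (1/4) powr \<bar>\<beta>\<bar> * sqrt X * ln X powr (1 - \<alpha> - \<beta>)
        \<le> real (card {(a, b). a \<in> A \<and> b \<in> B \<and> real (a * b) \<le> X})"
  proof eventually_elim
    case (elim X)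
    then show ?case
      using assms(2-5) XA XB by (intro card_pairs_lower_bound) auto
  qed
  moreover have "0 < C^2 / 80 * (1/4) powr \<bar>\<alpha>\<bar> * (1/4::real) powr \<bar>\<beta>\<bar>" using assms(5) by simp
  ultimately show ?thesis by blast
qed

end
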